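(* Let $s,t$ be positive integers. Then $prc(K_{s,t})=\max\{s,t\}$.
   Context: $K_{s,t}$ is the complete bipartite graph with parts of sizes $s$ and $t$. A path in an edge-coloured graph is a rainbow path if its edges receive pairwise distinct colours. The proper rainbow connection number $prc(G)$ is the minimum number of colours in a proper edge-colouring (adjacent edges get distinct colours) such that every two distinct vertices are joined by a rainbow path. *)

theory Defs
  imports Main
begin

definition walk_edges :: "'a list \<Rightarrow> 'a set list" where
  "walk_edges p = map (\<lambda>(a, b). {a, b}) (zip p (tl p))"

definition is_path :: "'a set set \<Rightarrow> 'a \<Rightarrow> 'a \<Rightarrow> 'a list \<Rightarrow> bool" where
  "is_path E u v p \<longleftrightarrow> p \<noteq> [] \<and> hd p = u \<and> last p = v \<and> distinct p
     \<and> set (walk_edges p) \<subseteq> E"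

definition rainbow_path :: "'a set set \<Rightarrow> ('a set \<Rightarrow> nat) \<Rightarrow> 'a \<Rightarrow> 'a \<Rightarrow> 'a list \<Rightarrow> bool" where
  "rainbow_path E c u v p \<longleftrightarrow> is_path E u v p \<and> distinct (map c (walk_edges p))"

definition proper_edge_colouring :: "'a set set \<Rightarrow> ('a set \<Rightarrow> nat) \<Rightarrow> bool" where
  "proper_edge_colouring E c \<longleftrightarrow>
     (\<forall>e\<in>E. \<forall>f\<in>E. e \<noteq> f \<and> e \<inter> f \<noteq> {} \<longrightarrow> c e \<noteq> c f)"

definition proper_rainbow_colouring :: "'a set \<Rightarrow> 'a set set \<Rightarrow> ('a set \<Rightarrow> nat) \<Rightarrow> bool" where
  "proper_rainbow_colouring V E c \<longleftrightarrow> proper_edge_colouring E c \<and>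
     (\<forall>u\<in>V. \<forall>v\<in>V. u \<noteq> v \<longrightarrow> (\<exists>p. rainbow_path E c u v p))"

text \<open>Proper rainbow connection number: least k such that some proper rainbow
colouring uses only colours from {0..<k} (i.e. at most k colours).\<close>
definition prc :: "'a set \<Rightarrow> 'a set set \<Rightarrow> nat" where
  "prc V E = (LEAST k. \<exists>c. c ` E \<subseteq> {..<k} \<and> proper_rainbow_colouring V E c)"

definition Kbip_V :: "nat \<Rightarrow> nat \<Rightarrow> (nat + nat) set" where
  "Kbip_V s t = Inl ` {..<s} \<union> Inr ` {..<t}"

definition Kbip_E :: "nat \<Rightarrow> nat \<Rightarrow> (nat + nat) set set" where
  "Kbip_E s t = {{Inl i, Inr j} | i j. i < s \<and> j < t}"

end

theory Submission
  imports Defs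
begin

text \<open>In a proper colouring the edges at one vertex get pairwise distinct colours, so
  the degrees s and t of K_{s,t} bound the number of colours from below. Conversely,
  colouring the edge {Inl i, Inr j} by (i + j) mod max s t is proper, and since
  K_{s,t} has diameter 2 any two vertices are joined by a path of at most two edges,
  which is rainbow because its edges are adjacent.\<close>

lemma proper_edge_colouringD:
  "proper_edge_colouring E c \<Longrightarrow> e \<in> E \<Longrightarrow> f \<in> E \<Longrightarrow> e \<noteq> f \<Longrightarrow> e \<inter> f \<noteq> {}
    \<Longrightarrow> c e \<noteq> c f"
  unfolding proper_edge_colouring_def by blast

lemma proper_edge_colouring_card_star_le:
  assumes proper: "proper_edge_colouring E c" and colours: "c ` E \<subseteq> {..<k}"
    and "F \<subseteq> E" and "\<forall>e\<in>F. v \<in> e"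
  shows "card F \<le> k"
proof -
  have "inj_on c F"
  proof (rule inj_onI, rule ccontr)
    fix e f assume "e \<in> F" "f \<in> F" "c e = c f" "e \<noteq> f"
    moreover from \<open>e \<in> F\<close> \<open>f \<in> F\<close> have "v \<in> e \<inter> f" using assms(4) by blast
    ultimately show False using proper_edge_colouringD[OF proper] assms(3) by blast
  qed
  then have "card F \<le> card {..<k}"
    by (rule card_inj_on_le) (use assms(3) colours in auto)
  then show ?thesis by simp
qed

lemma rainbow_path_edge:
  "{u, v} \<in> E \<Longrightarrow> u \<noteq> v \<Longrightarrow> rainbow_path E c u v [u, v]"
  unfolding rainbow_path_def is_path_def walk_edges_def by simp

lemma rainbow_path_two_edges:
  assumes "proper_edge_colouring E c" "{u, w} \<in> E" "{w, v} \<in> E"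
    and "u \<noteq> v" "u \<noteq> w" "w \<noteq> v"
  shows "rainbow_path E c u v [u, w, v]"
proof -
  have "{u, w} \<noteq> {w, v}" using assms(4-6) by (auto simp: doubleton_eq_iff)
  then have "c {u, w} \<noteq> c {w, v}"
    using proper_edge_colouringD[OF assms(1-3)] by blast
  then show ?thesis
    using assms unfolding rainbow_path_def is_path_def walk_edges_def by simp
qed

lemma mod_add_left_eq_iff_below:
  fixes a b i n :: nat
  assumes "a < n" "b < n"
  shows "(i + a) mod n = (i + b) mod n \<longleftrightarrow> a = b"
proof
  assume "(i + a) mod n = (i + b) mod n"
  then have "a mod n = b mod n" by (simp add: nat_mod_eq_iff)
  then show "a = b" using assms by simp
qed simp

lemma Kbip_edgeI: "i < s \<Longrightarrow> j < t \<Longrightarrow> {Inl i, Inr j} \<in> Kbip_E s t"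
  unfolding Kbip_E_def by blast

lemma Kbip_edgeE:
  assumes "e \<in> Kbip_E s t"
  obtains i j where "e = {Inl i, Inr j}" "i < s" "j < t"
  using assms unfolding Kbip_E_def by blast

lemma Kbip_VE:
  assumes "v \<in> Kbip_V s t"
  obtains (Inl) i where "v = Inl i" "i < s" | (Inr) j where "v = Inr j" "j < t"
  using assms unfolding Kbip_V_def by blast

lemma Kbip_colours_ge:
  assumes "0 < s" "0 < t"
    and proper: "proper_edge_colouring (Kbip_E s t) c" and colours: "c ` Kbip_E s t \<subseteq> {..<k}"
  shows "max s t \<le> k"
proof -
  have "card ((\<lambda>j. {Inl 0, Inr j}) ` {..<t} :: (nat + nat) set set) \<le> k"
    by (rule proper_edge_colouring_card_star_le[OF proper colours, where v = "Inl 0"])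
      (use \<open>0 < s\<close> Kbip_edgeI in auto)
  moreover have "inj_on (\<lambda>j. {Inl 0 :: nat + nat, Inr j}) {..<t}"
    by (auto intro: inj_onI simp: doubleton_eq_iff)
  ultimately have "t \<le> k" by (simp add: card_image)
  have "card ((\<lambda>i. {Inl i, Inr 0}) ` {..<s} :: (nat + nat) set set) \<le> k"
    by (rule proper_edge_colouring_card_star_le[OF proper colours, where v = "Inr 0"])
      (use \<open>0 < t\<close> Kbip_edgeI in auto)
  moreover have "inj_on (\<lambda>i. {Inl i, Inr 0 :: nat + nat}) {..<s}"
    by (auto intro: inj_onI simp: doubleton_eq_iff)
  ultimately have "s \<le> k" by (simp add: card_image)
  with \<open>t \<le> k\<close> show ?thesis by simp
qed

definition Kbip_cyclic_colouring :: "nat \<Rightarrow> (nat + nat) set \<Rightarrow> nat" where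
  "Kbip_cyclic_colouring n e = (\<Sum>x\<in>e. case_sum id id x) mod n"

lemma Kbip_cyclic_colouring_edge:
  "Kbip_cyclic_colouring n {Inl i, Inr j} = (i + j) mod n"
  unfolding Kbip_cyclic_colouring_def by simp

lemma Kbip_cyclic_colouring_range:
  assumes "0 < n"
  shows "Kbip_cyclic_colouring n ` Kbip_E s t \<subseteq> {..<n}"
  using assms by (auto elim!: Kbip_edgeE simp: Kbip_cyclic_colouring_edge)

lemma Kbip_cyclic_colouring_proper:
  assumes "s \<le> n" "t \<le> n"
  shows "proper_edge_colouring (Kbip_E s t) (Kbip_cyclic_colouring n)"
  unfolding proper_edge_colouring_def
proof (intro ballI impI)
  fix e f assume "e \<in> Kbip_E s t" "f \<in> Kbip_E s t" and ef: "e \<noteq> f \<and> e \<inter> f \<noteq> {}"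
  from \<open>e \<in> Kbip_E s t\<close> obtain i j where e: "e = {Inl i, Inr j}" "i < s" "j < t"
    by (rule Kbip_edgeE)
  from \<open>f \<in> Kbip_E s t\<close> obtain i' j' where f: "f = {Inl i', Inr j'}" "i' < s" "j' < t"
    by (rule Kbip_edgeE)
  have "i = i' \<or> j = j'" using ef unfolding e f by auto
  moreover have "i \<noteq> i' \<or> j \<noteq> j'" using ef unfolding e f by auto
  ultimately consider "i = i'" "j \<noteq> j'" | "j = j'" "i \<noteq> i'" by blast
  then show "Kbip_cyclic_colouring n e \<noteq> Kbip_cyclic_colouring n f"
  proof cases
    case 1
    then show ?thesis
      using e f assms mod_add_left_eq_iff_below[of j n j' i]
      by (simp add: Kbip_cyclic_colouring_edge)
  next
    case 2
    then show ?thesis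
      using e f assms mod_add_left_eq_iff_below[of i n i' j]
      by (simp add: Kbip_cyclic_colouring_edge add.commute)
  qed
qed

lemma Kbip_proper_rainbow_colouring:
  assumes "0 < s" "0 < t" and proper: "proper_edge_colouring (Kbip_E s t) c"
  shows "proper_rainbow_colouring (Kbip_V s t) (Kbip_E s t) c"
  unfolding proper_rainbow_colouring_def
proof (intro conjI proper ballI impI)
  fix u v assume u: "u \<in> Kbip_V s t" and v: "v \<in> Kbip_V s t" and "u \<noteq> v"
  have edge: "{Inl i, Inr j} \<in> Kbip_E s t" "{Inr j, Inl i} \<in> Kbip_E s t"
    if "i < s" "j < t" for i j
    using Kbip_edgeI[OF that] by (simp_all add: insert_commute)
  from u v show "\<exists>p. rainbow_path (Kbip_E s t) c u v p"
  proof (cases rule: Kbip_VE[case_product Kbip_VE])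
    case (Inl_Inl i i')
    then show ?thesis
      using rainbow_path_two_edges[OF proper edge(1) edge(2), of i 0 i'] \<open>0 < t\<close> \<open>u \<noteq> v\<close>
      by blast
  next
    case (Inl_Inr i j)
    then show ?thesis using rainbow_path_edge[OF edge(1)] \<open>u \<noteq> v\<close> by blast
  next
    case (Inr_Inl j i)
    then show ?thesis using rainbow_path_edge[OF edge(2)] \<open>u \<noteq> v\<close> by blast
  next
    case (Inr_Inr j j')
    then show ?thesis
      using rainbow_path_two_edges[OF proper edge(2) edge(1), of 0 j j'] \<open>0 < s\<close> \<open>u \<noteq> v\<close>
      by blast
  qed
qed

theorem theorem5p3:
  fixes s t :: nat
  assumes "0 < s" and "0 < t"
  shows "prc (Kbip_V s t) (Kbip_E s t) = max s t"
  unfolding prc_def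
proof (rule Least_equality)
  let ?c = "Kbip_cyclic_colouring (max s t)"
  have "?c ` Kbip_E s t \<subseteq> {..<max s t}"
    using assms by (intro Kbip_cyclic_colouring_range) simp
  moreover have "proper_rainbow_colouring (Kbip_V s t) (Kbip_E s t) ?c"
    using assms by (intro Kbip_proper_rainbow_colouring Kbip_cyclic_colouring_proper) simp_all
  ultimately show "\<exists>c. c ` Kbip_E s t \<subseteq> {..<max s t}
      \<and> proper_rainbow_colouring (Kbip_V s t) (Kbip_E s t) c"
    by blast
next
  fix k
  assume "\<exists>c. c ` Kbip_E s t \<subseteq> {..<k} \<and> proper_rainbow_colouring (Kbip_V s t) (Kbip_E s t) c"
  then show "max s t \<le> k"
    using Kbip_colours_ge[OF assms] unfolding proper_rainbow_colouring_def by blast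
qed

end
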